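(* Let $n\geq 1$, let $c^S<\sup_{f\in\mathcal{P}}q(f)$ and $c^D\geq 0$, and let $\Gamma_1\subseteq\mathcal{P}^n$ be the fixed-window IPT acceptance region for $\mathbf{H}_1$ with parameters $(c^S,c^D)$ (defined in the context). Then $$P_\infty\left(\hat f_{X_1^n}\in\Gamma_1\right)\leq (n+1)^m\exp\left(-n\left(c^D+\frac{\left(\left(c^S-q_0\right)^+\right)^2}{2L^2}\right)\right).$$
   Context: Setup. Let $\mathcal{A}=\{a_1,\dots,a_m\}$ be a finite alphabet and $\mathcal{P}$ the set of probability mass functions (p.m.f.s) on $\mathcal{A}$, with the $\ell_1$ norm $\|f-f'\|_1=\sum_a|f(a)-f'(a)|$. $I(f\|f')=\sum_{a}f(a)\log\frac{f(a)}{f'(a)}$ is the Kullback–Leibler divergence (natural logarithm, $0\log 0=0$). A known pre-change p.m.f. $f_0\in\mathcal{P}$ is fixed. $q:\mathcal{P}\to\mathbb{R}$ is quasiconcave and $L$-Lipschitz with respect to $\ell_1$ (i.e. $|q(f)-q(f')|\leq L\|f-f'\|_1$), with $q_0:=q(f_0)<0<\underline{q}$, and the set of possible post-change p.m.f.s $\mathcal{P}_1$ is a nonempty subset of $\{f: q(f)\geq\underline{q}\}$. Observations $X_1,X_2,\dots$ take values in $\mathcal{A}$; under $P_{f_1,t_1}$ ($f_1\in\mathcal{P}_1$, $t_1\geq 1$) the variables $X_1,\dots,X_{t_1-1}$ are i.i.d. $f_0$ and $X_{t_1},X_{t_1+1},\dots$ are i.i.d. $f_1$, independent of the former; $P_\infty$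 denotes the law under which all $X_k$ are i.i.d. $f_0$. For $i\leq j$, $\hat f_{X_i^j}(a)=\frac{1}{j-i+1}\#\{i\leq k\leq j: X_k=a\}$ is the empirical p.m.f., and $\mathcal{P}^n$ is the (finite) set of p.m.f.s realizable as empirical p.m.f.s of $n$ letters of $\mathcal{A}$. $(x)^+=\max\{x,0\}$. Fixed-window IPT. Given $c=(c^S,c^D)$ with $c^D\geq0$ and $c^S<\sup_f q(f)$, let $f^*=\arg\min_{f\in\mathcal{P}:\,q(f)\geq c^S}I(f\|f_0)$ be the I-projection of $f_0$ onto the closed convex set $\{q\geq c^S\}$. For sample size $n$, set $\Gamma_1=\{f\in\mathcal{P}^n: q(f)\geq c^S\text{ and } I(f\|f^* )\geq c^D\}$ and $\Gamma_0=\mathcal{P}^n\setminus\Gamma_1$; the test declares $\mathbf{H}_1$ (change/alternative) iff $\hat f_{X_1^n}\in\Gamma_1$. *)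

theory Defs
  imports "HOL-Probability.Probability"
begin

definition PMFs :: "('a::finite \<Rightarrow> real) set" where
  "PMFs = {f. (\<forall>a. 0 \<le> f a) \<and> (\<Sum>a\<in>UNIV. f a) = 1}"

definition l1dist :: "('a::finite \<Rightarrow> real) \<Rightarrow> ('a \<Rightarrow> real) \<Rightarrow> real" where
  "l1dist f g = (\<Sum>a\<in>UNIV. \<bar>f a - g a\<bar>)"

definition KL :: "('a::finite \<Rightarrow> real) \<Rightarrow> ('a \<Rightarrow> real) \<Rightarrow> ereal" where
  "KL f g = (\<Sum>a\<in>UNIV. if f a = 0 then 0
                        else if g a = 0 then \<infinity>
                        else ereal (f a * ln (f a / g a)))"

definition quasiconcave_on :: "('a \<Rightarrow> real) set \<Rightarrow> (('a \<Rightarrow> real) \<Rightarrow> real) \<Rightarrow> bool" where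
  "quasiconcave_on S q \<longleftrightarrow>
     (\<forall>f\<in>S. \<forall>g\<in>S. \<forall>t::real. 0 \<le> t \<and> t \<le> 1 \<longrightarrow>
        min (q f) (q g) \<le> q (\<lambda>a. t * f a + (1 - t) * g a))"

text \<open>Empirical p.m.f. of X_1^n, where X_1,...,X_n are the values x 0, ..., x (n-1).\<close>
definition empirical :: "(nat \<Rightarrow> 'a) \<Rightarrow> nat \<Rightarrow> 'a \<Rightarrow> real" where
  "empirical x n a = real (card {k. k < n \<and> x k = a}) / real n"

definition emp_types :: "nat \<Rightarrow> ('a \<Rightarrow> real) set" where
  "emp_types n = {f. \<exists>x. f = empirical x n}"

definition is_IProj ::
  "(('a::finite \<Rightarrow> real) \<Rightarrow> real) \<Rightarrow> real \<Rightarrow> ('a \<Rightarrow> real) \<Rightarrow> ('a \<Rightarrow> real) \<Rightarrow> bool" where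
  "is_IProj q cS f0 fs \<longleftrightarrow> fs \<in> PMFs \<and> cS \<le> q fs \<and>
     (\<forall>f\<in>PMFs. cS \<le> q f \<longrightarrow> KL fs f0 \<le> KL f f0)"

definition Gamma1 ::
  "(('a::finite \<Rightarrow> real) \<Rightarrow> real) \<Rightarrow> real \<Rightarrow> real \<Rightarrow> ('a \<Rightarrow> real) \<Rightarrow> nat \<Rightarrow> ('a \<Rightarrow> real) set" where
  "Gamma1 q cS cD fs n = {f \<in> emp_types n. cS \<le> q f \<and> ereal cD \<le> KL f fs}"

end

theory Submission
  imports Defs
begin

text \<open>Method of types: the type class of an empirical p.m.f. \<open>g\<close> has \<open>P\<^sub>\<infinity>\<close>-probability at most
  \<open>exp (-n I(g\<parallel>f\<^sub>0))\<close>, and there are at most \<open>(n+1)\<^sup>m\<close> types. For \<open>g \<in> \<Gamma>\<^sub>1\<close>, the first-order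
  optimality of the I-projection \<open>f\<^sup>*\<close> over the convex set \<open>{q \<ge> c\<^sup>S}\<close> gives the Pythagorean
  inequality \<open>I(g\<parallel>f\<^sub>0) \<ge> I(g\<parallel>f\<^sup>*) + I(f\<^sup>*\<parallel>f\<^sub>0) \<ge> c\<^sup>D + I(f\<^sup>*\<parallel>f\<^sub>0)\<close>, while Pinsker's inequality and
  the Lipschitz bound \<open>c\<^sup>S - q\<^sub>0 \<le> q(f\<^sup>*) - q\<^sub>0 \<le> L \<parallel>f\<^sup>* - f\<^sub>0\<parallel>\<^sub>1\<close> give
  \<open>I(f\<^sup>*\<parallel>f\<^sub>0) \<ge> ((c\<^sup>S - q\<^sub>0)\<^sup>+)\<^sup>2 / (2L\<^sup>2)\<close>.\<close>

section \<open>Elementary inequalities\<close>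

lemma ln_minus_rational_has_derivative:
  fixes x :: real
  assumes x: "0 < x"
  shows "((\<lambda>u. ln u - (5*u^2 - 4*u - 1) / (2*u^2 + 4*u)) has_real_derivative
           (x - 1)^3 / (x^2 * (x + 2)^2)) (at x)"
proof -
  have "2*x^2 + 4*x > 0" using x by (simp add: add_pos_pos)
  hence nz: "2*x^2 + 4*x \<noteq> 0" "x + 2 \<noteq> 0" "x \<noteq> 0" using x by auto
  have "((\<lambda>u. ln u - (5*u^2 - 4*u - 1) / (2*u^2 + 4*u)) has_real_derivative
          1/x - ((10*x - 4) * (2*x^2 + 4*x) - (5*x^2 - 4*x - 1) * (4*x + 4)) / (2*x^2 + 4*x)^2) (at x)"
    using x nz by (auto intro!: derivative_eq_intros) (simp add: divide_simps power2_eq_square)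
  moreover have "(2*x^2 + 4*x)^2 = 4 * (x^2 * (x + 2)^2)"
    by (simp add: algebra_simps power2_eq_square)
  hence "1/x - ((10*x - 4) * (2*x^2 + 4*x) - (5*x^2 - 4*x - 1) * (4*x + 4)) / (2*x^2 + 4*x)^2
      = (x - 1)^3 / (x^2 * (x + 2)^2)"
    using nz by (simp add: divide_simps) (simp add: algebra_simps power2_eq_square power3_eq_cube)
  ultimately show ?thesis by simp
qed

lemma ln_ge_rational_lower_bound:
  fixes u :: real
  assumes u: "0 < u"
  shows "(u - 1) * (5 * u + 1) / (2 * u * (u + 2)) \<le> ln u"
proof -
  define F where "F = (\<lambda>u::real. ln u - (5*u^2 - 4*u - 1) / (2*u^2 + 4*u))"
  note F_deriv = ln_minus_rational_has_derivative[folded F_def]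
  have F_cont: "continuous_on {a..b} F" if "0 < a" for a b
    using F_deriv that
    by (intro continuous_at_imp_continuous_on ballI) (meson DERIV_isCont atLeastAtMost_iff less_le_trans)
  have "F 1 \<le> F u"
  proof (cases "u \<le> 1")
    case True
    show ?thesis
    proof (rule DERIV_nonpos_imp_decreasing_open[OF True _ F_cont[OF u]])
      fix x assume x: "u < x" "x < 1"
      have "(x - 1)^3 = (x - 1) * (x - 1)^2" by (simp add: power3_eq_cube power2_eq_square)
      also have "\<dots> \<le> 0" using x by (intro mult_nonpos_nonneg) auto
      finally have "(x - 1)^3 / (x^2 * (x + 2)^2) \<le> 0" by (intro divide_nonpos_nonneg) auto
      thus "\<exists>y. DERIV F x :> y \<and> y \<le> 0" using F_deriv[of x] x u by auto
    qed
  next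
    case False
    show ?thesis
    proof (rule DERIV_nonneg_imp_increasing_open[of 1 u])
      fix x assume x: "1 < x" "x < u"
      hence "(x - 1)^3 / (x^2 * (x + 2)^2) \<ge> 0" by simp
      thus "\<exists>y. DERIV F x :> y \<and> y \<ge> 0" using F_deriv[of x] x by auto
    qed (use False F_cont in auto)
  qed
  moreover have "(u - 1) * (5*u + 1) / (2 * u * (u + 2)) = (5*u^2 - 4*u - 1) / (2*u^2 + 4*u)"
    by (simp add: algebra_simps power2_eq_square)
  ultimately show ?thesis by (simp add: F_def)
qed

lemma pinsker_pointwise:
  fixes x y :: real
  assumes x: "0 \<le> x" and y: "0 < y"
  shows "3 * (x - y)^2 / (2 * (x + 2 * y)) \<le> x * ln (x / y) - x + y"
proof (cases "x = 0")
  case True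
  thus ?thesis using y by (simp add: power2_eq_square)
next
  case False
  define u where "u = x / y"
  have u: "0 < u" and xu: "x = u * y" using False x y by (auto simp: u_def)
  have "x * ((u - 1) * (5*u + 1) / (2 * u * (u + 2))) \<le> x * ln u"
    using ln_ge_rational_lower_bound[OF u] x by (rule mult_left_mono)
  moreover have "u * y + 2 * y > 0" using u y by (simp add: add_pos_pos)
  hence "x * ((u - 1) * (5*u + 1) / (2 * u * (u + 2))) = 3 * (x - y)^2 / (2 * (x + 2 * y)) + x - y"
    unfolding xu using u y by (simp add: divide_simps power2_eq_square) (simp add: algebra_simps)
  ultimately show ?thesis by (simp add: u_def)
qed

lemma mult_ln_div_le_quadratic:
  fixes s p d :: real
  assumes s: "0 < s" and p: "0 < p" and sd: "0 \<le> s + d"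
  shows "(s + d) * ln ((s + d) / p) \<le> s * ln (s / p) + d * ln (s / p) + d + d^2 / s"
proof (cases "s + d = 0")
  case True
  thus ?thesis using s by (simp add: power2_eq_square add_eq_0_iff)
next
  case False
  hence h: "0 < s + d" using sd by simp
  have "ln ((s + d) / p) = ln ((s + d) / s) + ln (s / p)" using h s p by (simp add: ln_div)
  moreover have "(s + d) * ln ((s + d) / s) \<le> (s + d) * ((s + d) / s - 1)"
    using h s by (intro mult_left_mono ln_le_minus_one) auto
  moreover have "(s + d) * ((s + d) / s - 1) = d + d^2 / s"
    using s by (simp add: field_simps power2_eq_square)
  ultimately show ?thesis by (simp add: algebra_simps)
qed

lemma nonneg_affine_plus_log_imp:
  fixes Q K G :: real
  assumes K: "0 \<le> K" and G: "0 \<le> G"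
    and nonneg: "\<And>t. 0 < t \<Longrightarrow> t \<le> 1 \<Longrightarrow> 0 \<le> Q + t * K + ln t * G"
  shows "G = 0" and "0 \<le> Q"
proof -
  show G0: "G = 0"
  proof (rule ccontr)
    assume "G \<noteq> 0"
    hence Gp: "0 < G" using G by simp
    define t where "t = exp (- (\<bar>Q\<bar> + K + 1) / G)"
    have t: "0 < t" "t \<le> 1" using Gp K by (auto simp: t_def divide_nonpos_pos)
    have "ln t * G = - (\<bar>Q\<bar> + K + 1)" using Gp by (simp add: t_def)
    moreover have "t * K \<le> K" using mult_left_le_one_le[OF K] t by simp
    ultimately show False using nonneg[OF t] by linarith
  qed
  show "0 \<le> Q"
  proof (rule ccontr)
    assume "\<not> 0 \<le> Q"
    define t where "t = min 1 (- Q / (2 * (K + 1)))"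
    have "0 < - Q / (2 * (K + 1))" using \<open>\<not> 0 \<le> Q\<close> K by (intro divide_pos_pos) auto
    hence t: "0 < t" "t \<le> 1" by (auto simp: t_def)
    have "t * K \<le> (- Q / (2 * (K + 1))) * K" using K by (intro mult_right_mono) (auto simp: t_def)
    also have "\<dots> < - Q" using \<open>\<not> 0 \<le> Q\<close> K mult_nonneg_nonpos[of K Q] by (simp add: field_simps)
    finally show False using nonneg[OF t] G0 by simp
  qed
qed

section \<open>Kullback--Leibler divergence\<close>

text \<open>Real-valued form of \<open>KL\<close>; it agrees with \<open>KL\<close> only when \<open>g a = 0\<close> forces
  \<open>f a = 0\<close>, since \<open>x / 0 = 0\<close> and \<open>ln 0 = 0\<close> in HOL.\<close>
definition KL_real :: "('a::finite \<Rightarrow> real) \<Rightarrow> ('a \<Rightarrow> real) \<Rightarrow> real" where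
  "KL_real f g = (\<Sum>a\<in>UNIV. f a * ln (f a / g a))"

lemma KL_eq_ereal_KL_real:
  assumes "\<And>a. g a = 0 \<Longrightarrow> f a = 0"
  shows "KL f g = ereal (KL_real f g)"
proof -
  have "KL f g = (\<Sum>a\<in>UNIV. ereal (f a * ln (f a / g a)))"
    unfolding KL_def using assms by (intro sum.cong) auto
  thus ?thesis by (simp add: KL_real_def)
qed

lemma KL_eq_infinity:
  fixes f g :: "'a::finite \<Rightarrow> real"
  assumes "g a = 0" and "f a \<noteq> 0"
  shows "KL f g = \<infinity>"
  unfolding KL_def using assms by (subst sum_Pinfty) auto

lemma pinsker:
  fixes f g :: "'a::finite \<Rightarrow> real"
  assumes f: "f \<in> PMFs" and g: "g \<in> PMFs" and supp: "\<And>a. g a = 0 \<Longrightarrow> f a = 0"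
  shows "(l1dist f g)^2 \<le> 2 * KL_real f g"
proof -
  have f0: "\<And>a. 0 \<le> f a" and f1: "(\<Sum>a\<in>UNIV. f a) = 1"
    and g0: "\<And>a. 0 \<le> g a" and g1: "(\<Sum>a\<in>UNIV. g a) = 1"
    using f g by (auto simp: PMFs_def)
  \<comment> \<open>Cauchy--Schwarz against the weights \<open>f + 2g\<close>, of total mass 3.\<close>
  define w where "w a = f a + 2 * g a" for a
  define A where "A a = (if 0 < g a then \<bar>f a - g a\<bar> / sqrt (w a) else 0)" for a
  define B where "B a = sqrt (w a)" for a
  have AB_A2: "A a * B a = \<bar>f a - g a\<bar> \<and> 3/2 * (A a)^2 \<le> f a * ln (f a / g a) - f a + g a"
    for a
  proof (cases "0 < g a")
    case True
    hence "0 < w a" using f0[of a] by (simp add: w_def)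
    moreover have "3/2 * (A a)^2 = 3 * (f a - g a)^2 / (2 * (f a + 2 * g a))"
      using True \<open>0 < w a\<close> by (simp add: A_def power_divide w_def)
    moreover have "A a * B a = \<bar>f a - g a\<bar>" using True \<open>0 < w a\<close> by (simp add: A_def B_def)
    ultimately show ?thesis using pinsker_pointwise[OF f0[of a] True] by linarith
  next
    case False
    hence "g a = 0" using g0[of a] by simp
    thus ?thesis using supp[of a] by (simp add: A_def B_def)
  qed
  hence AB: "\<And>a. A a * B a = \<bar>f a - g a\<bar>"
    and A2: "\<And>a. 3/2 * (A a)^2 \<le> f a * ln (f a / g a) - f a + g a" by auto
  have B2: "(\<Sum>a\<in>UNIV. (B a)^2) = 3"
    using f0 g0 f1 g1 by (simp add: B_def w_def sum.distrib sum_distrib_left[symmetric])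
  have "(l1dist f g)^2 = (\<Sum>a\<in>UNIV. A a * B a)^2" by (simp add: l1dist_def AB)
  also have "\<dots> \<le> (\<Sum>a\<in>UNIV. (A a)^2) * (\<Sum>a\<in>UNIV. (B a)^2)" by (rule Cauchy_Schwarz_ineq_sum)
  also have "\<dots> = 2 * (\<Sum>a\<in>UNIV. 3/2 * (A a)^2)"
    using B2 by (simp add: sum_divide_distrib[symmetric] sum_distrib_left[symmetric])
  also have "\<dots> \<le> 2 * (\<Sum>a\<in>UNIV. f a * ln (f a / g a) - f a + g a)"
    by (intro mult_left_mono sum_mono A2) auto
  also have "\<dots> = 2 * KL_real f g" using f1 g1 by (simp add: KL_real_def sum.distrib sum_subtractf)
  finally show ?thesis .
qed

lemma mixture_mult_ln_le:
  fixes s g p t :: real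
  assumes s: "0 \<le> s" and g: "0 \<le> g" and p: "0 \<le> p"
    and sp: "p = 0 \<Longrightarrow> s = 0" and gp: "p = 0 \<Longrightarrow> g = 0" and t: "0 < t" "t \<le> 1"
  shows "((1 - t) * s + t * g) * ln (((1 - t) * s + t * g) / p)
       \<le> s * ln (s / p) + t * (if 0 < s then (g - s) * (ln (s / p) + 1) else g * ln (g / p))
         + t^2 * (if 0 < s then (g - s)^2 / s else 0) + t * ln t * (if 0 < s then 0 else g)"
proof (cases "0 < s")
  case True
  have "0 < p" using sp True p by force
  have mix: "(1 - t) * s + t * g = s + t * (g - s)" by (simp add: algebra_simps)
  have "0 \<le> (1 - t) * s + t * g" using s g t by (intro add_nonneg_nonneg mult_nonneg_nonneg) auto
  hence "(s + t * (g - s)) * ln ((s + t * (g - s)) / p)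
      \<le> s * ln (s / p) + t * (g - s) * ln (s / p) + t * (g - s) + (t * (g - s))^2 / s"
    using mult_ln_div_le_quadratic[OF True \<open>0 < p\<close>] by (simp add: mix)
  moreover have "(t * (g - s))^2 / s = t^2 * ((g - s)^2 / s)" by (simp add: power_mult_distrib)
  moreover have "t * ((g - s) * (ln (s / p) + 1)) = t * (g - s) * ln (s / p) + t * (g - s)"
    by (simp add: algebra_simps)
  ultimately show ?thesis using True by (simp add: mix)
next
  case False
  hence s0: "s = 0" using s by simp
  show ?thesis
  proof (cases "g = 0")
    case False
    hence "0 < g" "0 < p" using g gp p by force+
    hence "ln (t * g / p) = ln t + ln (g / p)" using t by (simp add: ln_mult ln_div)
    thus ?thesis using s0 by (simp add: algebra_simps)
  qed (simp add: s0)
qed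

lemma KL_real_mixture_le:
  fixes f g p :: "'a::finite \<Rightarrow> real" and t :: real
  assumes f: "\<And>a. 0 \<le> f a" and g: "\<And>a. 0 \<le> g a" and p: "\<And>a. 0 \<le> p a"
    and supp_f: "\<And>a. p a = 0 \<Longrightarrow> f a = 0" and supp_g: "\<And>a. p a = 0 \<Longrightarrow> g a = 0"
    and t: "0 < t" "t \<le> 1"
  defines "D \<equiv> \<lambda>a. if 0 < f a then (g a - f a) * (ln (f a / p a) + 1) else g a * ln (g a / p a)"
    and "K \<equiv> \<lambda>a. if 0 < f a then (g a - f a)^2 / f a else 0"
    and "G \<equiv> \<lambda>a. if 0 < f a then 0 else g a"
  shows "KL_real (\<lambda>a. (1 - t) * f a + t * g a) p
       \<le> KL_real f p + t * ((\<Sum>a\<in>UNIV. D a) + t * (\<Sum>a\<in>UNIV. K a) + ln t * (\<Sum>a\<in>UNIV. G a))"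
proof -
  have "KL_real (\<lambda>a. (1 - t) * f a + t * g a) p
      \<le> (\<Sum>a\<in>UNIV. f a * ln (f a / p a) + t * D a + t^2 * K a + t * ln t * G a)"
    unfolding KL_real_def D_def K_def G_def
    using f g p supp_f supp_g t by (intro sum_mono mixture_mult_ln_le)
  also have "\<dots> = KL_real f p + t * (\<Sum>a\<in>UNIV. D a) + t^2 * (\<Sum>a\<in>UNIV. K a)
                    + t * ln t * (\<Sum>a\<in>UNIV. G a)"
    by (simp add: KL_real_def sum.distrib sum_distrib_left)
  also have "\<dots> = KL_real f p + t * ((\<Sum>a\<in>UNIV. D a) + t * (\<Sum>a\<in>UNIV. K a) + ln t * (\<Sum>a\<in>UNIV. G a))"
    by (simp add: power2_eq_square algebra_simps)
  finally show ?thesis .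
qed

text \<open>First-order optimality of \<open>f\<close> along the segment towards \<open>g\<close>: the \<open>t ln t\<close> term
  forces \<open>g\<close> to be supported by \<open>f\<close>, the linear term is the directional derivative.\<close>
lemma KL_real_first_order_condition:
  fixes f g p :: "'a::finite \<Rightarrow> real"
  assumes f: "f \<in> PMFs" and g: "g \<in> PMFs" and p: "\<And>a. 0 \<le> p a"
    and supp_f: "\<And>a. p a = 0 \<Longrightarrow> f a = 0" and supp_g: "\<And>a. p a = 0 \<Longrightarrow> g a = 0"
    and min: "\<And>t. 0 < t \<Longrightarrow> t \<le> 1 \<Longrightarrow> KL_real f p \<le> KL_real (\<lambda>a. (1 - t) * f a + t * g a) p"
  shows "\<And>a. f a = 0 \<Longrightarrow> g a = 0" and "0 \<le> (\<Sum>a\<in>UNIV. (g a - f a) * ln (f a / p a))"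
proof -
  have f0: "\<And>a. 0 \<le> f a" and f1: "(\<Sum>a\<in>UNIV. f a) = 1"
    and g0: "\<And>a. 0 \<le> g a" and g1: "(\<Sum>a\<in>UNIV. g a) = 1"
    using f g by (auto simp: PMFs_def)
  define D where "D a = (if 0 < f a then (g a - f a) * (ln (f a / p a) + 1) else g a * ln (g a / p a))" for a
  define K where "K a = (if 0 < f a then (g a - f a)^2 / f a else 0)" for a
  define G where "G a = (if 0 < f a then 0 else g a)" for a
  have nonneg: "0 \<le> (\<Sum>a\<in>UNIV. D a) + t * (\<Sum>a\<in>UNIV. K a) + ln t * (\<Sum>a\<in>UNIV. G a)"
    if t: "0 < t" "t \<le> 1" for t
  proof -
    have "KL_real (\<lambda>a. (1 - t) * f a + t * g a) p
        \<le> KL_real f p + t * ((\<Sum>a\<in>UNIV. D a) + t * (\<Sum>a\<in>UNIV. K a) + ln t * (\<Sum>a\<in>UNIV. G a))"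
      unfolding D_def K_def G_def by (rule KL_real_mixture_le) (use f0 g0 p supp_f supp_g t in auto)
    hence "0 \<le> t * ((\<Sum>a\<in>UNIV. D a) + t * (\<Sum>a\<in>UNIV. K a) + ln t * (\<Sum>a\<in>UNIV. G a))"
      using min[OF t] by linarith
    thus ?thesis using t by (simp add: zero_le_mult_iff)
  qed
  have "0 \<le> (\<Sum>a\<in>UNIV. K a)" "0 \<le> (\<Sum>a\<in>UNIV. G a)"
    using g0 by (auto simp: K_def G_def intro!: sum_nonneg)
  note affine = nonneg_affine_plus_log_imp[OF this nonneg]
  hence G_sum: "(\<Sum>a\<in>UNIV. G a) = 0" and D_sum: "0 \<le> (\<Sum>a\<in>UNIV. D a)" by blast+
  have "G a = 0" for a
    using G_sum g0 by (subst (asm) sum_nonneg_eq_0_iff) (auto simp: G_def)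
  thus supp: "\<And>a. f a = 0 \<Longrightarrow> g a = 0" by (metis G_def less_irrefl)
  have "D a = (g a - f a) * ln (f a / p a) + (g a - f a)" for a
    using supp[of a] f0[of a] by (cases "0 < f a") (auto simp: D_def algebra_simps)
  hence "(\<Sum>a\<in>UNIV. D a) = (\<Sum>a\<in>UNIV. (g a - f a) * ln (f a / p a))"
    using f1 g1 by (simp add: sum.distrib sum_subtractf)
  thus "0 \<le> (\<Sum>a\<in>UNIV. (g a - f a) * ln (f a / p a))" using D_sum by simp
qed

lemma KL_real_chain_rule:
  fixes f g p :: "'a::finite \<Rightarrow> real"
  assumes f: "\<And>a. 0 \<le> f a" and g: "\<And>a. 0 \<le> g a" and p: "\<And>a. 0 \<le> p a"
    and supp_f: "\<And>a. p a = 0 \<Longrightarrow> f a = 0" and supp_g: "\<And>a. f a = 0 \<Longrightarrow> g a = 0"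
  shows "KL_real g p = KL_real g f + (\<Sum>a\<in>UNIV. (g a - f a) * ln (f a / p a)) + KL_real f p"
proof -
  have "g a * ln (g a / p a) = g a * ln (g a / f a) + (g a - f a) * ln (f a / p a) + f a * ln (f a / p a)"
    for a
  proof (cases "f a = 0")
    case False
    hence "0 < f a" "0 < p a" using f p supp_f by (metis less_eq_real_def)+
    moreover have "g a \<noteq> 0 \<Longrightarrow> ln (g a / p a) = ln (g a / f a) + ln (f a / p a)"
      using g[of a] calculation by (simp add: ln_div)
    ultimately show ?thesis by (cases "g a = 0") (auto simp: algebra_simps)
  qed (simp add: supp_g)
  thus ?thesis by (simp add: KL_real_def sum.distrib)
qed

lemma is_IProj_pythagorean:
  fixes q :: "('a::finite \<Rightarrow> real) \<Rightarrow> real" and p fs g :: "'a \<Rightarrow> real"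
  assumes qc: "quasiconcave_on PMFs q" and p: "p \<in> PMFs" and fs: "is_IProj q cS p fs"
    and g: "g \<in> PMFs" and gq: "cS \<le> q g" and supp_g: "\<And>a. p a = 0 \<Longrightarrow> g a = 0"
  shows "\<And>a. p a = 0 \<Longrightarrow> fs a = 0" and "\<And>a. fs a = 0 \<Longrightarrow> g a = 0"
    and "KL_real fs p + KL_real g fs \<le> KL_real g p"
proof -
  have p0: "\<And>a. 0 \<le> p a" using p by (simp add: PMFs_def)
  have fsP: "fs \<in> PMFs" and fsq: "cS \<le> q fs"
    and fs_min: "\<And>f. f \<in> PMFs \<Longrightarrow> cS \<le> q f \<Longrightarrow> KL fs p \<le> KL f p"
    using fs by (auto simp: is_IProj_def)
  have KL_g: "KL g p = ereal (KL_real g p)" using supp_g by (rule KL_eq_ereal_KL_real)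
  show supp_fs: "\<And>a. p a = 0 \<Longrightarrow> fs a = 0"
    using fs_min[OF g gq] KL_eq_infinity[of p _ fs] KL_g by force
  have "KL_real fs p \<le> KL_real (\<lambda>a. (1 - t) * fs a + t * g a) p" if t: "0 < t" "t \<le> 1" for t
  proof -
    define h where "h = (\<lambda>a. (1 - t) * fs a + t * g a)"
    have "h \<in> PMFs"
      using fsP g t by (auto simp: PMFs_def h_def sum.distrib sum_distrib_left[symmetric])
    moreover have "min (q fs) (q g) \<le> q (\<lambda>a. (1 - t) * fs a + (1 - (1 - t)) * g a)"
      using qc fsP g t unfolding quasiconcave_on_def
      by (elim ballE[of _ _ fs] ballE[of _ _ g] allE[of _ "1 - t"]) auto
    hence "min (q fs) (q g) \<le> q h" by (simp add: h_def)
    hence "cS \<le> q h" using fsq gq by simp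
    ultimately have "KL fs p \<le> KL h p" by (rule fs_min)
    moreover have "KL fs p = ereal (KL_real fs p)" and "KL h p = ereal (KL_real h p)"
      using supp_fs supp_g by (auto intro!: KL_eq_ereal_KL_real simp: h_def)
    ultimately show ?thesis by (simp add: h_def)
  qed
  note first_order = KL_real_first_order_condition[OF fsP g p0 supp_fs supp_g this]
  show supp: "\<And>a. fs a = 0 \<Longrightarrow> g a = 0" by (rule first_order(1))
  note deriv = first_order(2)
  show "KL_real fs p + KL_real g fs \<le> KL_real g p"
    using KL_real_chain_rule[of fs g p] fsP g p0 supp_fs supp deriv by (auto simp: PMFs_def)
qed

lemma is_IProj_KL_real_lower_bound:
  fixes q :: "('a::finite \<Rightarrow> real) \<Rightarrow> real" and p fs :: "'a \<Rightarrow> real"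
  assumes lip: "\<forall>f\<in>PMFs. \<forall>g\<in>PMFs. \<bar>q f - q g\<bar> \<le> L * l1dist f g"
    and p: "p \<in> PMFs" and fs: "is_IProj q cS p fs" and supp: "\<And>a. p a = 0 \<Longrightarrow> fs a = 0"
  shows "(max (cS - q p) 0)^2 / (2 * L^2) \<le> KL_real fs p"
proof -
  have fsP: "fs \<in> PMFs" and fsq: "cS \<le> q fs" using fs by (auto simp: is_IProj_def)
  have pin: "(l1dist fs p)^2 \<le> 2 * KL_real fs p" using pinsker[OF fsP p supp] .
  show ?thesis
  proof (cases "cS \<le> q p")
    case True
    have "0 \<le> KL_real fs p" using pin zero_le_power2[of "l1dist fs p"] by linarith
    thus ?thesis using True by simp
  next
    case False
    have gap: "cS - q p \<le> L * l1dist fs p" using lip fsP p fsq by fastforce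
    hence "L \<noteq> 0" using False by auto
    have "(cS - q p)^2 \<le> (L * l1dist fs p)^2" using False gap by (intro power_mono) auto
    hence "(cS - q p)^2 / (2 * L^2) \<le> (l1dist fs p)^2 / 2"
      using \<open>L \<noteq> 0\<close> by (simp add: power_mult_distrib field_simps)
    thus ?thesis using False pin by simp
  qed
qed

section \<open>Method of types\<close>

lemma card_occurrences_Suc:
  fixes x :: "nat \<Rightarrow> 'a"
  shows "card {k. k < Suc n \<and> x k = a} = card {k. k < n \<and> x k = a} + (if x n = a then 1 else 0)"
proof -
  have "{k. k < Suc n \<and> x k = a} = {k. k < n \<and> x k = a} \<union> (if x n = a then {n} else {})"
    by (auto simp: less_Suc_eq)
  thus ?thesis by (auto simp: card_insert_if)
qed

lemma prod_eq_prod_power_occurrences: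
  fixes p :: "'a::finite \<Rightarrow> 'b::comm_monoid_mult" and x :: "nat \<Rightarrow> 'a"
  shows "(\<Prod>k<n. p (x k)) = (\<Prod>a\<in>UNIV. p a ^ card {k. k < n \<and> x k = a})"
proof (induction n)
  case (Suc n)
  have "(\<Prod>a\<in>UNIV. p a ^ card {k. k < Suc n \<and> x k = a})
      = (\<Prod>a\<in>UNIV. p a ^ card {k. k < n \<and> x k = a} * (if x n = a then p a else 1))"
    by (intro prod.cong refl) (simp add: card_occurrences_Suc power_add)
  also have "\<dots> = (\<Prod>a\<in>UNIV. p a ^ card {k. k < n \<and> x k = a}) * p (x n)"
    by (simp add: prod.distrib prod.If_cases)
  finally show ?case using Suc by simp
qed simp

lemma sum_card_occurrences:
  fixes x :: "nat \<Rightarrow> 'a::finite"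
  shows "(\<Sum>a\<in>UNIV. card {k. k < n \<and> x k = a}) = n"
  by (induction n) (simp_all add: card_occurrences_Suc sum.distrib)

lemma empirical_in_PMFs:
  assumes "1 \<le> n"
  shows "empirical x n \<in> PMFs"
proof -
  have "(\<Sum>a\<in>UNIV. real (card {k. k < n \<and> x k = a})) = real n"
    by (simp only: of_nat_sum[symmetric] sum_card_occurrences)
  thus ?thesis using assms by (simp add: PMFs_def empirical_def sum_divide_distrib[symmetric])
qed

lemma emp_types_subset_image:
  "emp_types n \<subseteq> (\<lambda>c a. real (c a) / real n) ` PiE (UNIV::'a::finite set) (\<lambda>_. {0..n})"
proof
  fix f :: "'a \<Rightarrow> real"
  assume "f \<in> emp_types n"
  then obtain x where f: "f = empirical x n" by (auto simp: emp_types_def)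
  have "card {k. k < n \<and> x k = a} \<le> n" for a
    using card_mono[of "{..<n}" "{k. k < n \<and> x k = a}"] by auto
  thus "f \<in> (\<lambda>c a. real (c a) / real n) ` PiE UNIV (\<lambda>_. {0..n})"
    unfolding f empirical_def by (intro image_eqI[where x = "\<lambda>a. card {k. k < n \<and> x k = a}"]) auto
qed

lemma finite_emp_types: "finite (emp_types n :: ('a::finite \<Rightarrow> real) set)"
  by (rule finite_subset[OF emp_types_subset_image]) (intro finite_imageI finite_PiE; simp)

lemma card_emp_types_le: "card (emp_types n :: ('a::finite \<Rightarrow> real) set) \<le> (n + 1) ^ CARD('a)"
proof -
  let ?C = "PiE (UNIV::'a set) (\<lambda>_. {0..n})"
  have "card (emp_types n :: ('a \<Rightarrow> real) set) \<le> card ((\<lambda>c a. real (c a) / real n) ` ?C)"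
    by (intro card_mono emp_types_subset_image finite_imageI finite_PiE) simp_all
  also have "\<dots> \<le> card ?C" by (intro card_image_le finite_PiE) auto
  also have "card ?C = (n + 1) ^ CARD('a)" by (simp add: card_PiE)
  finally show ?thesis .
qed

lemma prob_Pi_pmf_eq_sum:
  fixes p :: "'a::finite pmf" and n :: nat
  shows "measure_pmf.prob (Pi_pmf {..<n} undefined (\<lambda>_. p)) A
       = (\<Sum>x\<in>A \<inter> PiE {..<n} (\<lambda>_. UNIV). \<Prod>k<n. pmf p (x k))"
proof -
  let ?M = "Pi_pmf {..<n} undefined (\<lambda>_. p)"
  let ?E = "PiE {..<n} (\<lambda>_. UNIV :: 'a set)"
  have "set_pmf ?M \<subseteq> ?E"
    using set_Pi_pmf_subset[of "{..<n}" undefined "\<lambda>_. p"] by (auto simp: PiE_def extensional_def)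
  hence "A \<inter> set_pmf ?M = (A \<inter> ?E) \<inter> set_pmf ?M" by blast
  hence "measure_pmf.prob ?M A = measure_pmf.prob ?M (A \<inter> ?E)"
    by (metis measure_Int_set_pmf)
  also have "\<dots> = (\<Sum>x\<in>A \<inter> ?E. pmf ?M x)"
    by (intro measure_measure_pmf_finite finite_Int) (auto intro: finite_PiE)
  also have "\<dots> = (\<Sum>x\<in>A \<inter> ?E. \<Prod>k<n. pmf p (x k))"
    by (intro sum.cong refl) (auto simp: pmf_Pi PiE_def extensional_def)
  finally show ?thesis .
qed

lemma prob_type_class:
  fixes p :: "'a::finite pmf"
  assumes n: "1 \<le> n"
  shows "measure_pmf.prob (Pi_pmf {..<n} undefined (\<lambda>_. p)) {x. empirical x n = empirical y n}
       = real (card ({x. empirical x n = empirical y n} \<inter> PiE {..<n} (\<lambda>_. UNIV)))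
         * (\<Prod>a\<in>UNIV. pmf p a ^ card {k. k < n \<and> y k = a})"
proof -
  let ?T = "{x. empirical x n = empirical y n}"
  have "card {k. k < n \<and> x k = a} = card {k. k < n \<and> y k = a}" if "x \<in> ?T" for x a
  proof -
    have "empirical x n a = empirical y n a" using that by simp
    thus ?thesis using n by (simp add: empirical_def divide_cancel_right)
  qed
  hence "(\<Prod>k<n. pmf p (x k)) = (\<Prod>a\<in>UNIV. pmf p a ^ card {k. k < n \<and> y k = a})"
    if "x \<in> ?T" for x
    using that by (simp only: prod_eq_prod_power_occurrences)
  hence "(\<Sum>x\<in>?T \<inter> PiE {..<n} (\<lambda>_. UNIV). \<Prod>k<n. pmf p (x k))
       = (\<Sum>x\<in>?T \<inter> PiE {..<n} (\<lambda>_. UNIV). \<Prod>a\<in>UNIV. pmf p a ^ card {k. k < n \<and> y k = a})"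
    by (intro sum.cong) auto
  thus ?thesis by (simp add: prob_Pi_pmf_eq_sum)
qed

lemma prob_type_class_eq_0:
  fixes p :: "'a::finite pmf"
  assumes n: "1 \<le> n" and "pmf p a = 0" and "empirical y n a \<noteq> 0"
  shows "measure_pmf.prob (Pi_pmf {..<n} undefined (\<lambda>_. p)) {x. empirical x n = empirical y n} = 0"
proof -
  have "{k. k < n \<and> y k = a} \<noteq> {}" using assms(3) by (auto simp: empirical_def)
  hence "card {k. k < n \<and> y k = a} \<noteq> 0" by (simp add: card_eq_0_iff)
  hence "pmf p a ^ card {k. k < n \<and> y k = a} = 0" by (metis assms(2) power_0_left)
  hence "(\<Prod>a\<in>UNIV. pmf p a ^ card {k. k < n \<and> y k = a}) = 0"
    by (meson UNIV_I finite_class.finite_UNIV prod_zero)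
  thus ?thesis by (simp only: prob_type_class[OF n] mult_zero_right)
qed

text \<open>The type class of \<open>g\<close> has probability at most \<open>1\<close> under \<open>g\<^sup>n\<close>; comparing the
  probabilities of one sequence under \<open>g\<^sup>n\<close> and \<open>f\<^sub>0\<^sup>n\<close> gives the factor \<open>exp (-n I(g\<parallel>f\<^sub>0))\<close>.\<close>
lemma prob_type_class_le:
  fixes p :: "'a::finite pmf"
  assumes n: "1 \<le> n" and g: "g = empirical y n" and supp: "\<And>a. pmf p a = 0 \<Longrightarrow> g a = 0"
  shows "measure_pmf.prob (Pi_pmf {..<n} undefined (\<lambda>_. p)) {x. empirical x n = g}
       \<le> exp (- (real n * KL_real g (pmf p)))"
proof -
  define c where "c a = card {k. k < n \<and> y k = a}" for a
  define N where "N = real (card ({x. empirical x n = g} \<inter> PiE {..<n} (\<lambda>_. UNIV)))"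
  have gc: "g a = real (c a) / real n" for a by (simp add: g empirical_def c_def)
  have gP: "g \<in> PMFs" using empirical_in_PMFs[OF n] g by simp
  hence g0: "\<And>a. 0 \<le> g a" by (simp add: PMFs_def)
  have "(\<integral>\<^sup>+a. ennreal (g a) \<partial>count_space UNIV) = 1"
    using gP by (simp add: PMFs_def nn_integral_count_space_finite)
  hence pmf_g: "pmf (embed_pmf g) a = g a" for a by (rule pmf_embed_pmf[OF g0])
  have "measure_pmf.prob (Pi_pmf {..<n} undefined (\<lambda>_. embed_pmf g)) {x. empirical x n = g}
      = N * (\<Prod>a\<in>UNIV. g a ^ c a)"
    using prob_type_class[OF n, of "embed_pmf g" y] by (simp add: N_def c_def g[symmetric] pmf_g)
  hence "N * (\<Prod>a\<in>UNIV. g a ^ c a) \<le> 1" by (metis measure_pmf.prob_le_1)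
  have power_eq: "pmf p a ^ c a = g a ^ c a * exp (- (real n * (g a * ln (g a / pmf p a))))" for a
  proof (cases "g a = 0")
    case False
    hence "0 < g a" "0 < pmf p a" using g0[of a] supp[of a] by (auto simp: less_le)
    moreover have "real n * g a = real (c a)" using gc[of a] n by simp
    ultimately have "- (real n * (g a * ln (g a / pmf p a))) = real (c a) * ln (pmf p a) - real (c a) * ln (g a)"
      by (simp add: ln_div algebra_simps flip: mult.assoc)
    moreover have "pmf p a ^ c a = exp (real (c a) * ln (pmf p a))" "g a ^ c a = exp (real (c a) * ln (g a))"
      using \<open>0 < g a\<close> \<open>0 < pmf p a\<close> by (simp_all add: exp_ln ln_realpow[symmetric])
    ultimately show ?thesis by (simp add: exp_add[symmetric])
  qed (use gc n in simp)
  have "measure_pmf.prob (Pi_pmf {..<n} undefined (\<lambda>_. p)) {x. empirical x n = g}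
      = N * (\<Prod>a\<in>UNIV. g a ^ c a) * exp (- (real n * KL_real g (pmf p)))"
    using prob_type_class[OF n, of p y]
    by (simp add: N_def c_def[symmetric] g[symmetric] power_eq prod.distrib
        KL_real_def exp_sum sum_distrib_left sum_negf[symmetric])
  also have "\<dots> \<le> exp (- (real n * KL_real g (pmf p)))"
    using \<open>N * (\<Prod>a\<in>UNIV. g a ^ c a) \<le> 1\<close> by (simp add: mult_left_le_one_le)
  finally show ?thesis .
qed

section \<open>The false-alarm bound\<close>

lemma prob_type_class_Gamma1_le:
  fixes q :: "('a::finite \<Rightarrow> real) \<Rightarrow> real" and f0 :: "'a pmf"
  assumes qc: "quasiconcave_on PMFs q"
    and lip: "\<forall>f\<in>PMFs. \<forall>g\<in>PMFs. \<bar>q f - q g\<bar> \<le> L * l1dist f g"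
    and fs: "is_IProj q cS (pmf f0) fs" and n: "1 \<le> n" and g: "g \<in> Gamma1 q cS cD fs n"
  shows "measure_pmf.prob (Pi_pmf {..<n} undefined (\<lambda>_. f0)) {x. empirical x n = g}
       \<le> exp (- (real n * (cD + (max (cS - q (pmf f0)) 0)^2 / (2 * L^2))))"
proof -
  obtain y where y: "g = empirical y n" and gq: "cS \<le> q g" and gD: "ereal cD \<le> KL g fs"
    using g by (auto simp: Gamma1_def emp_types_def)
  have gP: "g \<in> PMFs" using empirical_in_PMFs[OF n] y by simp
  have f0P: "pmf f0 \<in> PMFs" by (auto simp: PMFs_def sum_pmf_eq_1)
  show ?thesis
  proof (cases "\<forall>a. pmf f0 a = 0 \<longrightarrow> g a = 0")
    case False
    then obtain a where "pmf f0 a = 0" "empirical y n a \<noteq> 0" using y by auto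
    hence "measure_pmf.prob (Pi_pmf {..<n} undefined (\<lambda>_. f0)) {x. empirical x n = g} = 0"
      using prob_type_class_eq_0[OF n] y by simp
    thus ?thesis by simp
  next
    case True
    hence supp: "\<And>a. pmf f0 a = 0 \<Longrightarrow> g a = 0" by blast
    note pyth = is_IProj_pythagorean[OF qc f0P fs gP gq supp]
    have "KL g fs = ereal (KL_real g fs)" using pyth(2) by (rule KL_eq_ereal_KL_real)
    hence "cD \<le> KL_real g fs" using gD by simp
    moreover have "(max (cS - q (pmf f0)) 0)^2 / (2 * L^2) \<le> KL_real fs (pmf f0)"
      using is_IProj_KL_real_lower_bound[OF lip f0P fs pyth(1)] .
    ultimately have "cD + (max (cS - q (pmf f0)) 0)^2 / (2 * L^2) \<le> KL_real g (pmf f0)"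
      using pyth(3) by linarith
    hence "exp (- (real n * KL_real g (pmf f0)))
        \<le> exp (- (real n * (cD + (max (cS - q (pmf f0)) 0)^2 / (2 * L^2))))"
      by (simp add: mult_left_mono)
    thus ?thesis using prob_type_class_le[where p = f0, OF n y supp] by linarith
  qed
qed

theorem theorem1:
  fixes q :: "('a::finite \<Rightarrow> real) \<Rightarrow> real"
    and f0 :: "'a pmf"
    and L qlow cS cD :: real
    and P1 :: "('a \<Rightarrow> real) set"
    and fs :: "'a \<Rightarrow> real"
    and n :: nat
  assumes qc: "quasiconcave_on PMFs q"
    and lip: "\<forall>f\<in>PMFs. \<forall>g\<in>PMFs. \<bar>q f - q g\<bar> \<le> L * l1dist f g"
    and q0: "q (pmf f0) < 0" and qlow: "0 < qlow"
    and P1ne: "P1 \<noteq> {}" and P1sub: "P1 \<subseteq> {f\<in>PMFs. qlow \<le> q f}"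
    and n1: "1 \<le> n"
    and cS: "cS < (SUP f\<in>PMFs. q f)"
    and cD: "0 \<le> cD"
    and fstar: "is_IProj q cS (pmf f0) fs"
  shows "measure_pmf.prob (Pi_pmf {..<n} undefined (\<lambda>_. f0))
            {x. empirical x n \<in> Gamma1 q cS cD fs n}
         \<le> (real n + 1) ^ CARD('a) *
            exp (- (real n * (cD + (max (cS - q (pmf f0)) 0)\<^sup>2 / (2 * L\<^sup>2))))"
proof -
  let ?M = "Pi_pmf {..<n} undefined (\<lambda>_. f0)"
  let ?\<Gamma> = "Gamma1 q cS cD fs n"
  let ?bound = "exp (- (real n * (cD + (max (cS - q (pmf f0)) 0)^2 / (2 * L^2))))"
  have \<Gamma>_types: "?\<Gamma> \<subseteq> emp_types n" by (auto simp: Gamma1_def)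
  hence fin: "finite ?\<Gamma>" by (rule finite_subset[OF _ finite_emp_types])
  have "{x. empirical x n \<in> ?\<Gamma>} = (\<Union>g\<in>?\<Gamma>. {x. empirical x n = g})" by auto
  hence "measure_pmf.prob ?M {x. empirical x n \<in> ?\<Gamma>}
       \<le> (\<Sum>g\<in>?\<Gamma>. measure_pmf.prob ?M {x. empirical x n = g})"
    using measure_pmf.finite_measure_subadditive_finite[OF fin] by simp
  also have "\<dots> \<le> (\<Sum>g\<in>?\<Gamma>. ?bound)"
    by (intro sum_mono prob_type_class_Gamma1_le[OF qc lip fstar n1])
  also have "\<dots> = real (card ?\<Gamma>) * ?bound" by simp
  also have "\<dots> \<le> real ((n + 1) ^ CARD('a)) * ?bound"
  proof -
    have "card ?\<Gamma> \<le> (n + 1) ^ CARD('a)"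
      using card_mono[OF finite_emp_types \<Gamma>_types] card_emp_types_le by (rule le_trans)
    hence "real (card ?\<Gamma>) \<le> real ((n + 1) ^ CARD('a))" by (simp only: of_nat_le_iff)
    thus ?thesis by (intro mult_right_mono) simp_all
  qed
  finally show ?thesis by (simp add: add.commute)
qed

end
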